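(* Let $S$ be a random subset of a finite set $V$ and let $u\in V$. Suppose that the events $\{u'\in S\}$ for $u'\ne u$ are jointly independent of the event $\{u\in S\}$. Let $s$ be an element of $S$ chosen uniformly at random (if $S=\varnothing$, $s$ is undefined). Then $\Pr[u=s]\ge\Pr[u\in S]/(\mathbb{E}[|S|]+1)$. *)

theory Defs
  imports "HOL-Probability.Probability"
begin

definition uniform_element :: "'a set pmf \<Rightarrow> 'a option pmf" where
  "uniform_element P =
     bind_pmf P (\<lambda>A. if A = {} then return_pmf None else map_pmf Some (pmf_of_set A))"

end

theory Submission
  imports Defs
begin

text \<open>Write \<open>W = V - {u}\<close>. On the event \<open>u \<in> S\<close> we have \<open>|S| = |S \<inter> W| + 1\<close>, so
  \<open>Pr[s = u] = E[1{u \<in> S} / (|S \<inter> W| + 1)]\<close>. The random set \<open>S \<inter> W\<close> is measurable with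
  respect to the events \<open>{u' \<in> S}\<close>, \<open>u' \<noteq> u\<close>, hence independent of \<open>{u \<in> S}\<close>, and the
  expectation factors as \<open>Pr[u \<in> S] \<cdot> E[1 / (|S \<inter> W| + 1)]\<close>. Convexity of
  \<open>x \<mapsto> 1 / (x + 1)\<close> (Jensen, via its tangent line) bounds the second factor below by
  \<open>1 / (E|S \<inter> W| + 1) \<ge> 1 / (E|S| + 1)\<close>.\<close>

lemma inverse_succ_ge_tangent:
  fixes y m :: real
  assumes "0 \<le> y" "0 \<le> m"
  shows "1 / (m + 1) - (y - m) / (m + 1)^2 \<le> 1 / (y + 1)"
proof -
  have "1 / (m + 1) - (y - m) / (m + 1)^2 = (2 * m + 1 - y) / (m + 1)^2"
    using assms by (simp add: power2_eq_square divide_simps)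
  also have "\<dots> \<le> 1 / (y + 1)"
  proof -
    have "(2 * m + 1 - y) * (y + 1) \<le> (m + 1)^2"
      using zero_le_power2[of "y - m"] by (simp add: power2_eq_square algebra_simps)
    then show ?thesis
      using assms by (simp add: divide_simps)
  qed
  finally show ?thesis .
qed

lemma (in prob_space) inverse_succ_expectation_le:
  fixes X :: "'a \<Rightarrow> real"
  assumes X: "integrable M X" and nonneg: "AE x in M. 0 \<le> X x"
  shows "1 / (expectation X + 1) \<le> expectation (\<lambda>x. 1 / (X x + 1))"
proof -
  define m where "m = expectation X"
  have "0 \<le> m" unfolding m_def using nonneg by (rule integral_nonneg_AE)
  have "1 / (m + 1) = expectation (\<lambda>x. 1 / (m + 1) - (X x - m) / (m + 1)^2)"
    using X by (simp add: prob_space m_def)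
  also have "\<dots> \<le> expectation (\<lambda>x. 1 / (X x + 1))"
  proof (rule integral_mono_AE)
    show "integrable M (\<lambda>x. 1 / (X x + 1))"
      using nonneg X by (intro integrable_const_bound[where B=1]) (auto simp: borel_measurable_integrable)
    show "AE x in M. 1 / (m + 1) - (X x - m) / (m + 1)^2 \<le> 1 / (X x + 1)"
      using nonneg by eventually_elim (use \<open>0 \<le> m\<close> inverse_succ_ge_tangent in auto)
  qed (use X in auto)
  finally show ?thesis by (simp add: m_def)
qed

lemma Int_eq_in_sigma_sets:
  assumes "finite W" and gen: "\<And>v. v \<in> W \<Longrightarrow> {A. v \<in> A} \<in> G"
  shows "{A. A \<inter> W = T} \<in> sigma_sets UNIV G"
proof -
  interpret sigma_algebra UNIV "sigma_sets UNIV G"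
    by (rule sigma_algebra_sigma_sets) simp
  have "{A\<in>UNIV. v \<in> A \<longleftrightarrow> v \<in> T} \<in> sigma_sets UNIV G" if "v \<in> W" for v
  proof -
    have "{A\<in>UNIV. v \<in> A} \<in> sigma_sets UNIV G"
      using gen[OF that] by (simp add: sigma_sets.Basic)
    then show ?thesis
      by (cases "v \<in> T") (simp_all add: Collect_neg_eq Compl_eq_Diff_UNIV compl_sets)
  qed
  then have "{A\<in>UNIV. \<forall>v\<in>W. v \<in> A \<longleftrightarrow> v \<in> T} \<in> sigma_sets UNIV G"
    using \<open>finite W\<close> by (rule sets_Collect_finite_All)
  moreover have "{A. A \<inter> W = T} = (if T \<subseteq> W then {A\<in>UNIV. \<forall>v\<in>W. v \<in> A \<longleftrightarrow> v \<in> T} else {})"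
    by auto
  ultimately show ?thesis by simp
qed

lemma pmf_uniform_element_Some:
  assumes "\<And>A. A \<in> set_pmf P \<Longrightarrow> finite A"
  shows "pmf (uniform_element P) (Some u)
         = measure_pmf.expectation P (\<lambda>A. indicator A u / real (card A))"
  unfolding uniform_element_def pmf_bind
  by (intro integral_cong_AE) (auto simp: AE_measure_pmf_iff pmf_map_inj' assms)

lemma expectation_indicator_mult_indep:
  fixes P :: "'a set pmf" and g :: "'a set \<Rightarrow> real"
  assumes "finite W" and gen: "\<And>v. v \<in> W \<Longrightarrow> {A. v \<in> A} \<in> G"
    and indep: "prob_space.indep_set (measure_pmf P) (sigma_sets UNIV G) {E}"
  shows "measure_pmf.expectation P (\<lambda>A. indicator E A * g (A \<inter> W))
         = measure_pmf.prob P E * measure_pmf.expectation P (\<lambda>A. g (A \<inter> W))"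
proof -
  have split: "g (A \<inter> W) = (\<Sum>T\<in>Pow W. g T * indicator {A. A \<inter> W = T} A)" for A
    using \<open>finite W\<close> by (simp add: indicator_def sum.delta')
  have prod: "measure_pmf.prob P ({A. A \<inter> W = T} \<inter> E)
              = measure_pmf.prob P {A. A \<inter> W = T} * measure_pmf.prob P E" for T
    using Int_eq_in_sigma_sets[OF \<open>finite W\<close> gen]
    by (intro prob_space.indep_setD[OF measure_pmf.prob_space_axioms indep]) auto
  have "measure_pmf.expectation P (\<lambda>A. indicator E A * g (A \<inter> W))
        = measure_pmf.expectation P (\<lambda>A. \<Sum>T\<in>Pow W. g T * indicator ({A. A \<inter> W = T} \<inter> E) A)"
    by (subst split) (simp add: sum_distrib_left indicator_inter_arith mult_ac)
  also have "\<dots> = (\<Sum>T\<in>Pow W. g T * measure_pmf.prob P ({A. A \<inter> W = T} \<inter> E))"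
    by (subst Bochner_Integration.integral_sum) (simp_all add: less_top[symmetric])
  also have "\<dots> = measure_pmf.prob P E * measure_pmf.expectation P (\<lambda>A. g (A \<inter> W))"
    by (subst split, subst Bochner_Integration.integral_sum)
       (simp_all add: prod sum_distrib_left mult_ac less_top[symmetric])
  finally show ?thesis .
qed

lemma indicator_div_card_eq:
  assumes "finite V" "A \<subseteq> V"
  shows "indicator A u / real (card A)
         = indicator {A. u \<in> A} A * (1 / (real (card (A \<inter> (V - {u}))) + 1))"
proof (cases "u \<in> A")
  case True
  have "A \<inter> (V - {u}) = A - {u}" using assms(2) by auto
  moreover have "card A = Suc (card (A - {u}))"
    using card.remove[OF finite_subset[OF assms(2,1)] True] .
  ultimately show ?thesis using True by simp
qed simp

theorem mainTheorem9:
  fixes P :: "'a set pmf" and V :: "'a set" and u :: 'a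
  assumes "finite V"
    and "u \<in> V"
    and "\<And>A. A \<in> set_pmf P \<Longrightarrow> A \<subseteq> V"
    and "prob_space.indep_set (measure_pmf P)
           (sigma_sets (space (measure_pmf P)) {{A. u' \<in> A} | u'. u' \<noteq> u})
           {{A. u \<in> A}}"
  shows "measure_pmf.prob (uniform_element P) {Some u}
         \<ge> measure_pmf.prob P {A. u \<in> A}
             / (measure_pmf.expectation P (\<lambda>A. real (card A)) + 1)"
proof -
  define W where "W = V - {u}"
  define p where "p = measure_pmf.prob P {A. u \<in> A}"
  have finite_sets: "finite A" if "A \<in> set_pmf P" for A
    using assms(1,3) that finite_subset by blast
  have integrable: "integrable (measure_pmf P) f" for f :: "'a set \<Rightarrow> real"
    using assms(1,3) by (intro integrable_measure_pmf_finite) (auto intro: finite_subset[of _ "Pow V"])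
  have "p / (measure_pmf.expectation P (\<lambda>A. real (card A)) + 1)
        \<le> p / (measure_pmf.expectation P (\<lambda>A. real (card (A \<inter> W))) + 1)"
    using finite_sets
    by (intro divide_left_mono add_right_mono integral_mono_AE integrable mult_pos_pos
          add_nonneg_pos integral_nonneg) (auto simp: p_def AE_measure_pmf_iff card_mono)
  also have "\<dots> = p * (1 / (measure_pmf.expectation P (\<lambda>A. real (card (A \<inter> W))) + 1))"
    by simp
  also have "\<dots> \<le> p * measure_pmf.expectation P (\<lambda>A. 1 / (real (card (A \<inter> W)) + 1))"
    by (intro mult_left_mono measure_pmf.inverse_succ_expectation_le integrable) (simp_all add: p_def)
  also have "\<dots> = measure_pmf.expectation P
                     (\<lambda>A. indicator {A. u \<in> A} A * (1 / (real (card (A \<inter> W)) + 1)))"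
    using assms(1,4) unfolding p_def W_def
    by (intro expectation_indicator_mult_indep[symmetric]) auto
  also have "\<dots> = measure_pmf.expectation P (\<lambda>A. indicator A u / real (card A))"
    using assms(1,3) unfolding W_def
    by (intro integral_cong_AE) (auto simp: AE_measure_pmf_iff indicator_div_card_eq)
  also have "\<dots> = measure_pmf.prob (uniform_element P) {Some u}"
    by (simp add: measure_pmf_single pmf_uniform_element_Some finite_sets)
  finally show ?thesis by (simp add: p_def)
qed

end
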